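(* Let $a\in\mathbb{F}$ be such that $\mathbb{F}$ has finite dimension as a right vector space over $K^{\sigma,\delta}_a$. Then for every $r\in\mathbb{Z}_+$ there exists a $(\sigma,\delta)$-multiplicity sequence $\mathbf a=(a_1,\dots,a_r)\in\mathbb{F}^r$ with $a_1=a$.
   Context: Let $\mathbb{F}$ be a division ring, $\sigma$ a ring endomorphism and $\delta$ a $\sigma$-derivation; $\mathbb{F}[x;\sigma,\delta]$ is the skew polynomial ring with $xa=\sigma(a)x+\delta(a)$. $K^{\sigma,\delta}_a=\{\beta\in\mathbb{F}:\sigma(\beta)a+\delta(\beta)=a\beta\}$ is the $(\sigma,\delta)$-centralizer of $a$, a division subring. For $\mathbf a=(a_1,\dots,a_r)$, $P_{\mathbf a}=(x-a_r)\cdots(x-a_1)$; $\mathbf a$ is a $(\sigma,\delta)$-multiplicity sequence if $a_1$ is the only $b\in\mathbb{F}$ such that $x-b$ divides $P_{\mathbf a}$ on the right. *)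

theory Defs
  imports "HOL-Computational_Algebra.Polynomial"
begin

(* Skew polynomials F[x; sigma, delta] are represented by their (left) coefficient
   sequences, stored in the library type 'a poly (used only as a container of
   finitely supported coefficients; the library multiplication is NOT used).
   p = sum_n (coeff p n) x^n. *)

definition ring_endo :: "('a::division_ring \<Rightarrow> 'a) \<Rightarrow> bool" where
  "ring_endo \<sigma> \<longleftrightarrow> (\<forall>a b. \<sigma> (a + b) = \<sigma> a + \<sigma> b) \<and>
                    (\<forall>a b. \<sigma> (a * b) = \<sigma> a * \<sigma> b) \<and> \<sigma> 1 = 1"

definition sigma_derivation :: "('a::division_ring \<Rightarrow> 'a) \<Rightarrow> ('a \<Rightarrow> 'a) \<Rightarrow> bool" where
  "sigma_derivation \<sigma> \<delta> \<longleftrightarrow> (\<forall>a b. \<delta> (a + b) = \<delta> a + \<delta> b) \<and>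
                             (\<forall>a b. \<delta> (a * b) = \<sigma> a * \<delta> b + \<delta> a * b)"

(* left multiplication by x:  x * (c x^i) = sigma(c) x^(i+1) + delta(c) x^i *)
definition skew_xmult :: "('a::division_ring \<Rightarrow> 'a) \<Rightarrow> ('a \<Rightarrow> 'a) \<Rightarrow> 'a poly \<Rightarrow> 'a poly" where
  "skew_xmult \<sigma> \<delta> q = Poly (map (\<lambda>i. (if i = 0 then 0 else \<sigma> (coeff q (i - 1))) + \<delta> (coeff q i))
                                [0..<Suc (Suc (degree q))])"

definition skew_mult :: "('a::division_ring \<Rightarrow> 'a) \<Rightarrow> ('a \<Rightarrow> 'a) \<Rightarrow> 'a poly \<Rightarrow> 'a poly \<Rightarrow> 'a poly" where
  "skew_mult \<sigma> \<delta> p q = Poly (map (\<lambda>i. \<Sum>n\<le>degree p. coeff p n * coeff ((skew_xmult \<sigma> \<delta> ^^ n) q) i)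
                                [0..<Suc (degree p + degree q)])"

definition skew_lin :: "'a::division_ring \<Rightarrow> 'a poly" where
  "skew_lin b = [: - b, 1 :]"

(* P_a = (x - a_r) ... (x - a_1) for the list [a_1, ..., a_r] *)
definition P_seq :: "('a::division_ring \<Rightarrow> 'a) \<Rightarrow> ('a \<Rightarrow> 'a) \<Rightarrow> 'a list \<Rightarrow> 'a poly" where
  "P_seq \<sigma> \<delta> as = foldl (\<lambda>acc b. skew_mult \<sigma> \<delta> (skew_lin b) acc) [: 1 :] as"

definition right_dvd :: "('a::division_ring \<Rightarrow> 'a) \<Rightarrow> ('a \<Rightarrow> 'a) \<Rightarrow> 'a poly \<Rightarrow> 'a poly \<Rightarrow> bool" where
  "right_dvd \<sigma> \<delta> f g \<longleftrightarrow> (\<exists>Q. g = skew_mult \<sigma> \<delta> Q f)"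

definition multiplicity_seq :: "('a::division_ring \<Rightarrow> 'a) \<Rightarrow> ('a \<Rightarrow> 'a) \<Rightarrow> 'a list \<Rightarrow> bool" where
  "multiplicity_seq \<sigma> \<delta> as \<longleftrightarrow> as \<noteq> [] \<and>
     (\<forall>b. right_dvd \<sigma> \<delta> (skew_lin b) (P_seq \<sigma> \<delta> as) \<longleftrightarrow> b = hd as)"

definition centralizer :: "('a::division_ring \<Rightarrow> 'a) \<Rightarrow> ('a \<Rightarrow> 'a) \<Rightarrow> 'a \<Rightarrow> 'a set" where
  "centralizer \<sigma> \<delta> a = {\<beta>. \<sigma> \<beta> * a + \<delta> \<beta> = a * \<beta>}"

definition right_fin_dim :: "'a::division_ring set \<Rightarrow> bool" where
  "right_fin_dim K \<longleftrightarrow> (\<exists>B. finite B \<and>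
     (\<forall>y. \<exists>c. (\<forall>v\<in>B. c v \<in> K) \<and> y = (\<Sum>v\<in>B. v * c v)))"

end

theory Submission
  imports Defs
begin

(* F[x; \<sigma>, \<delta>] acts on F through the pseudo-linear map T_b c = \<sigma>(c) b + \<delta>(c): the action of
   f is f(T_b), this is multiplicative, and x - b divides f on the right iff f(T_b) kills 1.
   So b is a right root of P_a iff P_a(T_b) kills 1. For b conjugate to a, P_a(T_b) is
   conjugate to P_a(T_a), which is additive and right linear over the centralizer K of a.
   Choose a_1 = a, a_2, ... inductively, all conjugate to a, keeping ker P_a(T_a) inside K.
   Then a right root b yields c \<noteq> 0 in that kernel with T_a c = b c, and c \<in> K forces b = a.
   The next a_(r+1) comes from an element outside the image of P_a(T_a); one exists since
   P_a(T_a) kills 1, and a right K-linear map with nonzero kernel on a finite-dimensional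
   space is not surjective. *)

locale sigma_delta =
  fixes \<sigma> \<delta> :: "'a::division_ring \<Rightarrow> 'a"
  assumes ring_endo: "ring_endo \<sigma>" and sigma_derivation: "sigma_derivation \<sigma> \<delta>"
begin

lemma sigma_add: "\<sigma> (x + y) = \<sigma> x + \<sigma> y"
  using ring_endo unfolding ring_endo_def by blast

lemma sigma_mult: "\<sigma> (x * y) = \<sigma> x * \<sigma> y"
  using ring_endo unfolding ring_endo_def by blast

lemma sigma_one: "\<sigma> 1 = 1"
  using ring_endo unfolding ring_endo_def by blast

lemma sigma_zero: "\<sigma> 0 = 0"
  using sigma_add[of 0 0] by simp

lemma sigma_minus: "\<sigma> (- x) = - \<sigma> x"
  using sigma_add[of x "- x"] sigma_zero minus_unique[of "\<sigma> x" "\<sigma> (- x)"] by simp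

lemma sigma_nonzero: "x \<noteq> 0 \<Longrightarrow> \<sigma> x \<noteq> 0"
  using sigma_mult[of x "inverse x"] sigma_one by auto

lemma delta_add: "\<delta> (x + y) = \<delta> x + \<delta> y"
  using sigma_derivation unfolding sigma_derivation_def by blast

lemma delta_mult: "\<delta> (x * y) = \<sigma> x * \<delta> y + \<delta> x * y"
  using sigma_derivation unfolding sigma_derivation_def by blast

lemma delta_zero: "\<delta> 0 = 0"
  using delta_add[of 0 0] by simp

lemma delta_minus: "\<delta> (- x) = - \<delta> x"
  using delta_add[of x "- x"] delta_zero minus_unique[of "\<delta> x" "\<delta> (- x)"] by simp

lemma delta_one: "\<delta> 1 = 0"
  using delta_mult[of 1 1] sigma_one by simp

subsection \<open>The pseudo-linear maps T_b\<close>

definition pseudo_lin :: "'a \<Rightarrow> 'a \<Rightarrow> 'a" where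
  "pseudo_lin b c = \<sigma> c * b + \<delta> c"

lemma pseudo_lin_add: "pseudo_lin b (x + y) = pseudo_lin b x + pseudo_lin b y"
  unfolding pseudo_lin_def sigma_add delta_add by (simp add: algebra_simps)

lemma pseudo_lin_zero: "pseudo_lin b 0 = 0"
  unfolding pseudo_lin_def sigma_zero delta_zero by simp

lemma pseudo_lin_minus: "pseudo_lin b (- x) = - pseudo_lin b x"
  unfolding pseudo_lin_def sigma_minus delta_minus by simp

lemma pseudo_lin_one: "pseudo_lin b 1 = b"
  unfolding pseudo_lin_def sigma_one delta_one by simp

lemma pseudo_lin_mult: "pseudo_lin b (x * y) = \<sigma> x * pseudo_lin b y + \<delta> x * y"
  unfolding pseudo_lin_def sigma_mult delta_mult by (simp add: algebra_simps)

lemma pseudo_lin_sum: "pseudo_lin b (sum f A) = (\<Sum>i\<in>A. pseudo_lin b (f i))"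
  using sum_comp_morphism[of "pseudo_lin b" f A, OF pseudo_lin_zero pseudo_lin_add]
  by (simp add: o_def)

lemma funpow_pseudo_lin_zero: "(pseudo_lin b ^^ n) 0 = 0"
  by (induction n) (auto simp: pseudo_lin_zero)

lemma pseudo_lin_mult_conjugate:
  "pseudo_lin a c = b * c \<Longrightarrow> pseudo_lin a (d * c) = pseudo_lin b d * c"
  unfolding pseudo_lin_mult by (simp add: pseudo_lin_def algebra_simps)

lemma pseudo_lin_inverse_conjugate:
  assumes "u \<noteq> 0" "pseudo_lin b u = x * u"
  shows "pseudo_lin x (inverse u) = b * inverse u"
proof -
  have "b = pseudo_lin b (inverse u * u)"
    using assms(1) by (simp add: pseudo_lin_one)
  also have "\<dots> = pseudo_lin x (inverse u) * u"
    by (rule pseudo_lin_mult_conjugate[OF assms(2)])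
  finally show ?thesis
    using assms(1) by (simp add: mult.assoc)
qed

lemma centralizer_iff: "\<beta> \<in> centralizer \<sigma> \<delta> a \<longleftrightarrow> pseudo_lin a \<beta> = a * \<beta>"
  by (simp add: centralizer_def pseudo_lin_def)

abbreviation xpow :: "nat \<Rightarrow> 'a poly \<Rightarrow> 'a poly" where
  "xpow n q \<equiv> (skew_xmult \<sigma> \<delta> ^^ n) q"

lemma coeff_skew_xmult:
  "coeff (skew_xmult \<sigma> \<delta> q) i = (if i = 0 then 0 else \<sigma> (coeff q (i - 1))) + \<delta> (coeff q i)"
proof (cases "i < Suc (Suc (degree q))")
  case True
  then show ?thesis
    unfolding skew_xmult_def by (simp add: nth_default_def del: upt_Suc)
next
  case False
  then have "coeff q i = 0" "coeff q (i - 1) = 0"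
    by (auto intro: coeff_eq_0)
  with False show ?thesis
    unfolding skew_xmult_def by (simp add: nth_default_def sigma_zero delta_zero)
qed

lemma degree_skew_xmult: "degree (skew_xmult \<sigma> \<delta> q) \<le> Suc (degree q)"
  by (rule degree_le) (auto simp: coeff_skew_xmult coeff_eq_0 sigma_zero delta_zero)

lemma degree_xpow: "degree (xpow n q) \<le> n + degree q"
  by (induction n) (auto intro: order.trans[OF degree_skew_xmult])

lemma coeff_xpow_eq_0: "n + degree q < i \<Longrightarrow> coeff (xpow n q) i = 0"
  using degree_xpow[of n q] by (intro coeff_eq_0) simp

lemma coeff_skew_mult:
  "coeff (skew_mult \<sigma> \<delta> p q) i = (\<Sum>n\<le>degree p. coeff p n * coeff (xpow n q) i)"
proof (cases "i < Suc (degree p + degree q)")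
  case True
  then show ?thesis
    unfolding skew_mult_def by (simp add: nth_default_def del: upt_Suc)
next
  case False
  then have "\<forall>n\<in>{..degree p}. coeff (xpow n q) i = 0"
    by (auto intro: coeff_xpow_eq_0)
  with False show ?thesis
    unfolding skew_mult_def by (simp add: nth_default_def)
qed

lemma sum_coeff_mono_degree:
  "degree (p :: 'a poly) \<le> M \<Longrightarrow> (\<Sum>n\<le>degree p. coeff p n * h n) = (\<Sum>n\<le>M. coeff p n * h n)"
  by (rule sum.mono_neutral_left) (auto simp: coeff_eq_0)

lemma coeff_skew_mult_mono_degree:
  "degree p \<le> M \<Longrightarrow> coeff (skew_mult \<sigma> \<delta> p q) i = (\<Sum>n\<le>M. coeff p n * coeff (xpow n q) i)"
  by (simp add: coeff_skew_mult sum_coeff_mono_degree)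

lemma degree_skew_mult: "degree (skew_mult \<sigma> \<delta> p q) \<le> degree p + degree q"
  by (rule degree_le) (auto simp: coeff_skew_mult intro!: sum.neutral coeff_xpow_eq_0)

lemma skew_mult_add_left:
  "skew_mult \<sigma> \<delta> (p + p') q = skew_mult \<sigma> \<delta> p q + skew_mult \<sigma> \<delta> p' q"
proof (rule poly_eqI)
  fix i
  let ?M = "max (degree p) (degree p')"
  have "coeff (skew_mult \<sigma> \<delta> (p + p') q) i = (\<Sum>n\<le>?M. coeff (p + p') n * coeff (xpow n q) i)"
    by (rule coeff_skew_mult_mono_degree) (rule degree_add_le_max)
  also have "\<dots> = (\<Sum>n\<le>?M. coeff p n * coeff (xpow n q) i) + (\<Sum>n\<le>?M. coeff p' n * coeff (xpow n q) i)"
    by (simp add: distrib_right sum.distrib)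
  also have "\<dots> = coeff (skew_mult \<sigma> \<delta> p q + skew_mult \<sigma> \<delta> p' q) i"
    using coeff_skew_mult_mono_degree[of p ?M q i] coeff_skew_mult_mono_degree[of p' ?M q i]
    by simp
  finally show "coeff (skew_mult \<sigma> \<delta> (p + p') q) i = coeff (skew_mult \<sigma> \<delta> p q + skew_mult \<sigma> \<delta> p' q) i" .
qed

lemma skew_mult_0_left: "skew_mult \<sigma> \<delta> 0 q = 0"
  by (rule poly_eqI) (simp add: coeff_skew_mult)

lemma coeff_skew_mult_monom:
  "coeff (skew_mult \<sigma> \<delta> (monom \<alpha> n) q) i = \<alpha> * coeff (xpow n q) i"
proof -
  have "coeff (skew_mult \<sigma> \<delta> (monom \<alpha> n) q) i = (\<Sum>k\<le>n. coeff (monom \<alpha> n) k * coeff (xpow k q) i)"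
    by (rule coeff_skew_mult_mono_degree) (simp add: degree_monom_le)
  also have "\<dots> = \<alpha> * coeff (xpow n q) i"
    by (subst sum.remove[of _ n]) auto
  finally show ?thesis .
qed

lemma degree_skew_lin: "degree (skew_lin b) = 1"
  by (simp add: skew_lin_def)

lemma lead_coeff_xpow_skew_lin: "coeff (xpow n (skew_lin b)) (Suc n) = 1"
proof (induction n)
  case 0
  then show ?case by (simp add: skew_lin_def)
next
  case (Suc n)
  have "coeff (xpow n (skew_lin b)) (Suc (Suc n)) = 0"
    by (rule coeff_xpow_eq_0) (simp add: degree_skew_lin)
  with Suc show ?case
    by (simp add: coeff_skew_xmult sigma_one delta_zero)
qed

lemma skew_lin_division: "\<exists>Q r. f = skew_mult \<sigma> \<delta> Q (skew_lin b) + [:r:]"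
proof -
  have "\<exists>Q r. f = skew_mult \<sigma> \<delta> Q (skew_lin b) + [:r:]" if "degree f \<le> N" for N f
    using that
  proof (induction N arbitrary: f)
    case 0
    then have "f = [:coeff f 0:]"
      by (metis degree_0_id le_zero_eq)
    then show ?case
      by (metis add_0 skew_mult_0_left)
  next
    case (Suc N)
    define m where "m = skew_mult \<sigma> \<delta> (monom (coeff f (Suc N)) N) (skew_lin b)"
    have "coeff (f - m) i = 0" if "N < i" for i
    proof (cases "i = Suc N")
      case True
      then show ?thesis
        by (simp add: m_def coeff_skew_mult_monom lead_coeff_xpow_skew_lin)
    next
      case False
      with \<open>N < i\<close> Suc.prems have "coeff f i = 0" "coeff (xpow N (skew_lin b)) i = 0"
        by (auto intro!: coeff_eq_0 coeff_xpow_eq_0 simp: degree_skew_lin)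
      then show ?thesis
        by (simp add: m_def coeff_skew_mult_monom)
    qed
    then have "degree (f - m) \<le> N"
      by (intro degree_le) blast
    from Suc.IH[OF this] obtain Q r where "f - m = skew_mult \<sigma> \<delta> Q (skew_lin b) + [:r:]"
      by blast
    then have "f = skew_mult \<sigma> \<delta> (Q + monom (coeff f (Suc N)) N) (skew_lin b) + [:r:]"
      by (simp add: skew_mult_add_left m_def algebra_simps)
    then show ?case by blast
  qed
  then show ?thesis by blast
qed

subsection \<open>Evaluation of skew polynomials through T_b\<close>

definition skew_eval :: "'a \<Rightarrow> 'a poly \<Rightarrow> 'a \<Rightarrow> 'a" where
  "skew_eval b f c = (\<Sum>n\<le>degree f. coeff f n * (pseudo_lin b ^^ n) c)"

lemma skew_eval_mono_degree:
  "degree f \<le> M \<Longrightarrow> skew_eval b f c = (\<Sum>n\<le>M. coeff f n * (pseudo_lin b ^^ n) c)"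
  unfolding skew_eval_def by (rule sum_coeff_mono_degree)

lemma skew_eval_skew_xmult: "skew_eval b (skew_xmult \<sigma> \<delta> q) c = pseudo_lin b (skew_eval b q c)"
proof -
  let ?D = "degree q" and ?T = "pseudo_lin b"
  have "skew_eval b (skew_xmult \<sigma> \<delta> q) c = (\<Sum>n\<le>Suc ?D. coeff (skew_xmult \<sigma> \<delta> q) n * (?T ^^ n) c)"
    by (rule skew_eval_mono_degree[OF degree_skew_xmult])
  also have "\<dots> = (\<Sum>n\<le>Suc ?D. (if n = 0 then 0 else \<sigma> (coeff q (n - 1))) * (?T ^^ n) c)
                 + (\<Sum>n\<le>Suc ?D. \<delta> (coeff q n) * (?T ^^ n) c)"
    by (simp add: coeff_skew_xmult distrib_right sum.distrib)
  also have "(\<Sum>n\<le>Suc ?D. (if n = 0 then 0 else \<sigma> (coeff q (n - 1))) * (?T ^^ n) c)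
             = (\<Sum>n\<le>?D. \<sigma> (coeff q n) * ?T ((?T ^^ n) c))"
    by (subst sum.atMost_Suc_shift) simp
  also have "(\<Sum>n\<le>Suc ?D. \<delta> (coeff q n) * (?T ^^ n) c) = (\<Sum>n\<le>?D. \<delta> (coeff q n) * (?T ^^ n) c)"
    by (simp add: coeff_eq_0 delta_zero)
  also have "(\<Sum>n\<le>?D. \<sigma> (coeff q n) * ?T ((?T ^^ n) c)) + (\<Sum>n\<le>?D. \<delta> (coeff q n) * (?T ^^ n) c)
             = ?T (skew_eval b q c)"
    unfolding skew_eval_def pseudo_lin_sum pseudo_lin_mult by (simp add: sum.distrib)
  finally show ?thesis .
qed

lemma skew_eval_xpow: "skew_eval b (xpow n q) c = (pseudo_lin b ^^ n) (skew_eval b q c)"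
  by (induction n) (auto simp: skew_eval_skew_xmult)

lemma skew_eval_skew_mult: "skew_eval b (skew_mult \<sigma> \<delta> p q) c = skew_eval b p (skew_eval b q c)"
proof -
  let ?N = "degree p + degree q" and ?T = "pseudo_lin b"
  have "skew_eval b (skew_mult \<sigma> \<delta> p q) c = (\<Sum>i\<le>?N. coeff (skew_mult \<sigma> \<delta> p q) i * (?T ^^ i) c)"
    by (rule skew_eval_mono_degree[OF degree_skew_mult])
  also have "\<dots> = (\<Sum>n\<le>degree p. coeff p n * (\<Sum>i\<le>?N. coeff (xpow n q) i * (?T ^^ i) c))"
    by (simp add: coeff_skew_mult sum_distrib_right sum_distrib_left mult.assoc sum.swap[of _ "{..?N}"])
  also have "\<dots> = (\<Sum>n\<le>degree p. coeff p n * skew_eval b (xpow n q) c)"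
  proof (rule sum.cong[OF refl])
    fix n
    assume "n \<in> {..degree p}"
    then have "degree (xpow n q) \<le> ?N"
      using degree_xpow[of n q] by auto
    then show "coeff p n * (\<Sum>i\<le>?N. coeff (xpow n q) i * (?T ^^ i) c) = coeff p n * skew_eval b (xpow n q) c"
      by (simp add: skew_eval_mono_degree)
  qed
  also have "\<dots> = skew_eval b p (skew_eval b q c)"
    unfolding skew_eval_xpow by (simp add: skew_eval_def)
  finally show ?thesis .
qed

lemma skew_eval_add: "skew_eval b (f + g) c = skew_eval b f c + skew_eval b g c"
proof -
  let ?M = "max (degree f) (degree g)"
  have "skew_eval b (f + g) c = (\<Sum>n\<le>?M. coeff (f + g) n * (pseudo_lin b ^^ n) c)"
    by (rule skew_eval_mono_degree) (rule degree_add_le_max)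
  also have "\<dots> = skew_eval b f c + skew_eval b g c"
    using skew_eval_mono_degree[of f ?M b c] skew_eval_mono_degree[of g ?M b c]
    by (simp add: distrib_right sum.distrib)
  finally show ?thesis .
qed

lemma skew_eval_const: "skew_eval b [:r:] c = r * c"
  by (simp add: skew_eval_def)

lemma skew_eval_skew_lin: "skew_eval b (skew_lin x) c = pseudo_lin b c - x * c"
  by (simp add: skew_eval_def skew_lin_def)

lemma skew_eval_at_0: "skew_eval b f 0 = 0"
  by (simp add: skew_eval_def funpow_pseudo_lin_zero)

lemma right_dvd_skew_lin_iff: "right_dvd \<sigma> \<delta> (skew_lin b) f \<longleftrightarrow> skew_eval b f 1 = 0"
proof
  assume "right_dvd \<sigma> \<delta> (skew_lin b) f"
  then obtain Q where "f = skew_mult \<sigma> \<delta> Q (skew_lin b)"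
    unfolding right_dvd_def by blast
  then show "skew_eval b f 1 = 0"
    by (simp add: skew_eval_skew_mult skew_eval_skew_lin pseudo_lin_one skew_eval_at_0)
next
  assume root: "skew_eval b f 1 = 0"
  obtain Q r where f: "f = skew_mult \<sigma> \<delta> Q (skew_lin b) + [:r:]"
    using skew_lin_division by blast
  then have "skew_eval b f 1 = r"
    by (simp add: skew_eval_add skew_eval_skew_mult skew_eval_skew_lin pseudo_lin_one
        skew_eval_at_0 skew_eval_const)
  with root f show "right_dvd \<sigma> \<delta> (skew_lin b) f"
    unfolding right_dvd_def by auto
qed

subsection \<open>The operators P_a(T_b) = (T_b - a_r) ... (T_b - a_1)\<close>

fun P_eval :: "'a \<Rightarrow> 'a list \<Rightarrow> 'a \<Rightarrow> 'a" where
  "P_eval b [] c = c"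
| "P_eval b (x # xs) c = P_eval b xs (pseudo_lin b c - x * c)"

lemma P_eval_snoc: "P_eval b (as @ [x]) c = pseudo_lin b (P_eval b as c) - x * P_eval b as c"
  by (induction as arbitrary: c) auto

lemma skew_eval_P_seq: "skew_eval b (P_seq \<sigma> \<delta> as) c = P_eval b as c"
proof (induction as arbitrary: c rule: rev_induct)
  case Nil
  then show ?case by (simp add: P_seq_def skew_eval_const)
next
  case (snoc x xs)
  have "P_seq \<sigma> \<delta> (xs @ [x]) = skew_mult \<sigma> \<delta> (skew_lin x) (P_seq \<sigma> \<delta> xs)"
    by (simp add: P_seq_def)
  then show ?case
    by (simp add: skew_eval_skew_mult skew_eval_skew_lin snoc P_eval_snoc)
qed

lemma right_dvd_P_seq_iff: "right_dvd \<sigma> \<delta> (skew_lin b) (P_seq \<sigma> \<delta> as) \<longleftrightarrow> P_eval b as 1 = 0"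
  by (simp add: right_dvd_skew_lin_iff skew_eval_P_seq)

lemma P_eval_zero: "P_eval b as 0 = 0"
  by (induction as rule: rev_induct) (auto simp: P_eval_snoc pseudo_lin_zero)

lemma P_eval_add: "P_eval b as (c + d) = P_eval b as c + P_eval b as d"
  by (induction as rule: rev_induct) (auto simp: P_eval_snoc pseudo_lin_add algebra_simps)

lemma P_eval_mult_conjugate:
  "pseudo_lin a c = b * c \<Longrightarrow> P_eval a as (d * c) = P_eval b as d * c"
  by (induction as rule: rev_induct) (auto simp: P_eval_snoc pseudo_lin_mult_conjugate algebra_simps)

lemma P_eval_Cons_self_one: "P_eval a (a # as) 1 = 0"
  by (simp add: pseudo_lin_one P_eval_zero)

(* x is the (\<sigma>,\<delta>)-conjugate \<sigma>(e) a e\<^sup>-\<^sup>1 + \<delta>(e) e\<^sup>-\<^sup>1 of a *)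
definition conjugate :: "'a \<Rightarrow> 'a \<Rightarrow> bool" where
  "conjugate a x \<longleftrightarrow> (\<exists>e. e \<noteq> 0 \<and> pseudo_lin a e = x * e)"

lemma conjugate_of_P_eval_root:
  assumes "\<forall>x\<in>set as. conjugate a x" "d \<noteq> 0" "P_eval b as d = 0"
  shows "conjugate a b"
  using assms
proof (induction as rule: rev_induct)
  case Nil
  then show ?case by simp
next
  case (snoc x xs)
  define u where "u = P_eval b xs d"
  show ?case
  proof (cases "u = 0")
    case True
    with snoc show ?thesis by (simp add: u_def)
  next
    case False
    from snoc.prems(3) have "pseudo_lin b u = x * u"
      by (simp add: P_eval_snoc u_def)
    from pseudo_lin_inverse_conjugate[OF False this]
    have "pseudo_lin x (inverse u) = b * inverse u" .
    moreover from snoc.prems(1) obtain e where "e \<noteq> 0" "pseudo_lin a e = x * e"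
      by (auto simp: conjugate_def)
    ultimately show ?thesis
      unfolding conjugate_def using False
      by (intro exI[of _ "inverse u * e"]) (simp add: pseudo_lin_mult_conjugate mult.assoc)
  qed
qed

end

subsection \<open>Right linear maps over a division subring\<close>

locale division_subring =
  fixes K :: "'a::division_ring set"
  assumes zero_mem: "0 \<in> K" and one_mem: "1 \<in> K"
    and add_mem: "\<And>x y. x \<in> K \<Longrightarrow> y \<in> K \<Longrightarrow> x + y \<in> K"
    and minus_mem: "\<And>x. x \<in> K \<Longrightarrow> - x \<in> K"
    and mult_mem: "\<And>x y. x \<in> K \<Longrightarrow> y \<in> K \<Longrightarrow> x * y \<in> K"
    and inverse_mem: "\<And>x. x \<in> K \<Longrightarrow> inverse x \<in> K"
begin

lemma diff_mem: "x \<in> K \<Longrightarrow> y \<in> K \<Longrightarrow> x - y \<in> K"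
  using add_mem minus_mem by (metis diff_conv_add_uminus)

lemma sum_mem: "(\<And>i. i \<in> A \<Longrightarrow> f i \<in> K) \<Longrightarrow> sum f A \<in> K"
  by (induction A rule: infinite_finite_induct) (auto intro: zero_mem add_mem)

(* back substitution in the elimination step of the Steinitz argument below *)
lemma relation_of_reduced_relation:
  assumes "finite J" "k \<in> J" "g k \<noteq> 0" "\<forall>j\<in>J. g j \<in> K"
    and "\<forall>j\<in>J - {k}. \<beta> j \<in> K" "\<exists>j\<in>J - {k}. \<beta> j \<noteq> 0"
    and "(\<Sum>j\<in>J - {k}. (w j - w k * inverse (g k) * g j) * \<beta> j) = 0"
  shows "\<exists>\<beta>. (\<forall>j\<in>J. \<beta> j \<in> K) \<and> (\<exists>j\<in>J. \<beta> j \<noteq> 0) \<and> (\<Sum>j\<in>J. w j * \<beta> j) = 0"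
proof -
  define S where "S = (\<Sum>j\<in>J - {k}. g j * \<beta> j)"
  define \<beta>' where "\<beta>' = (\<lambda>j. if j = k then - (inverse (g k) * S) else \<beta> j)"
  have "(\<Sum>j\<in>J. w j * \<beta>' j) = w k * \<beta>' k + (\<Sum>j\<in>J - {k}. w j * \<beta>' j)"
    using sum.remove[OF assms(1,2)] .
  also have "(\<Sum>j\<in>J - {k}. w j * \<beta>' j) = (\<Sum>j\<in>J - {k}. w j * \<beta> j)"
    by (rule sum.cong) (auto simp: \<beta>'_def)
  also have "(\<Sum>j\<in>J - {k}. w j * \<beta> j)
      = (\<Sum>j\<in>J - {k}. (w j - w k * inverse (g k) * g j) * \<beta> j + w k * inverse (g k) * (g j * \<beta> j))"
    by (rule sum.cong) (auto simp: algebra_simps)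
  also have "\<dots> = w k * inverse (g k) * S"
    using assms(7) by (simp add: sum.distrib S_def sum_distrib_left)
  finally have "(\<Sum>j\<in>J. w j * \<beta>' j) = 0"
    by (simp add: \<beta>'_def algebra_simps)
  moreover have "S \<in> K"
    unfolding S_def using assms(4,5) by (intro sum_mem mult_mem) auto
  then have "\<forall>j\<in>J. \<beta>' j \<in> K"
    using assms(2-5) by (auto simp: \<beta>'_def intro!: minus_mem mult_mem inverse_mem)
  moreover have "\<exists>j\<in>J. \<beta>' j \<noteq> 0"
    using assms(6) by (auto simp: \<beta>'_def)
  ultimately show ?thesis by blast
qed

lemma dependent_if_card_span_less:
  assumes "finite B" "finite J" "card B < card J"
    and "\<forall>v\<in>B. \<forall>j\<in>J. \<gamma> v j \<in> K" "\<forall>j\<in>J. w j = (\<Sum>v\<in>B. v * \<gamma> v j)"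
  shows "\<exists>\<beta>. (\<forall>j\<in>J. \<beta> j \<in> K) \<and> (\<exists>j\<in>J. \<beta> j \<noteq> 0) \<and> (\<Sum>j\<in>J. w j * \<beta> j) = 0"
  using assms
proof (induction B arbitrary: J w \<gamma> rule: finite_induct)
  case empty
  then obtain j0 where "j0 \<in> J"
    by (metis all_not_in_conv card.empty less_irrefl)
  with empty show ?case
    using zero_mem one_mem by (intro exI[of _ "\<lambda>j. if j = j0 then 1 else 0"]) auto
next
  case (insert x B)
  show ?case
  proof (cases "\<forall>j\<in>J. \<gamma> x j = 0")
    case True
    with insert show ?thesis by auto
  next
    case False
    then obtain k where k: "k \<in> J" "\<gamma> x k \<noteq> 0" by auto
    define c where "c = (\<lambda>j. inverse (\<gamma> x k) * \<gamma> x j)"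
    define w' where "w' = (\<lambda>j. w j - w k * inverse (\<gamma> x k) * \<gamma> x j)"
    define \<gamma>' where "\<gamma>' = (\<lambda>v j. \<gamma> v j - \<gamma> v k * c j)"
    have pivot: "\<gamma> x k * c j = \<gamma> x j" for j
      using k(2) by (simp add: c_def mult.assoc[symmetric])
    have "w' j = (\<Sum>v\<in>B. v * \<gamma>' v j)" if "j \<in> J - {k}" for j
    proof -
      have w_eq: "w i = x * \<gamma> x i + (\<Sum>v\<in>B. v * \<gamma> v i)" if "i \<in> J" for i
        using insert.prems(4) insert.hyps that by simp
      have "w' j = w j - w k * c j"
        by (simp add: w'_def c_def mult.assoc)
      also have "\<dots> = x * (\<gamma> x j - \<gamma> x k * c j)
                       + ((\<Sum>v\<in>B. v * \<gamma> v j) - (\<Sum>v\<in>B. v * \<gamma> v k) * c j)"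
        using that k(1) by (simp add: w_eq algebra_simps)
      also have "\<dots> = (\<Sum>v\<in>B. v * \<gamma>' v j)"
        by (simp add: pivot \<gamma>'_def sum_subtractf sum_distrib_right right_diff_distrib mult.assoc)
      finally show ?thesis .
    qed
    moreover have "\<forall>v\<in>B. \<forall>j\<in>J - {k}. \<gamma>' v j \<in> K"
      using insert.prems(3) k by (auto simp: \<gamma>'_def c_def intro!: diff_mem mult_mem inverse_mem)
    moreover have "card B < card (J - {k})"
      using insert k by simp
    ultimately obtain \<beta> where "\<forall>j\<in>J - {k}. \<beta> j \<in> K" "\<exists>j\<in>J - {k}. \<beta> j \<noteq> 0"
        "(\<Sum>j\<in>J - {k}. w' j * \<beta> j) = 0"
      using insert.IH[of "J - {k}" \<gamma>' w'] insert.prems(1) by auto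
    then show ?thesis
      using insert.prems(1,3) k by (intro relation_of_reduced_relation[of J k "\<gamma> x"])
        (auto simp: w'_def)
  qed
qed

lemma funpow_right_linear:
  assumes "\<And>c d. H (c + d) = H c + H d" "\<And>c \<beta>. \<beta> \<in> K \<Longrightarrow> H (c * \<beta>) = H c * \<beta>"
  shows "(H ^^ t) (c + d) = (H ^^ t) c + (H ^^ t) d"
    and "(H ^^ t) 0 = 0"
    and "\<beta> \<in> K \<Longrightarrow> (H ^^ t) (c * \<beta>) = (H ^^ t) c * \<beta>"
proof -
  show add: "(H ^^ t) (c + d) = (H ^^ t) c + (H ^^ t) d" for c d
    by (induction t) (auto simp: assms(1))
  show "(H ^^ t) 0 = 0"
    using add[of 0 0] by simp
  show "\<beta> \<in> K \<Longrightarrow> (H ^^ t) (c * \<beta>) = (H ^^ t) c * \<beta>"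
    by (induction t) (auto simp: assms(2))
qed

lemma chain_independent:
  assumes H_add: "\<And>c d. H (c + d) = H c + H d"
    and H_linear: "\<And>c \<beta>. \<beta> \<in> K \<Longrightarrow> H (c * \<beta>) = H c * \<beta>"
    and top: "\<And>t. (H ^^ t) (w t) \<noteq> 0" and below: "\<And>j t. j < t \<Longrightarrow> (H ^^ t) (w j) = 0"
    and "finite J" "\<forall>j\<in>J. \<beta> j \<in> K" "(\<Sum>j\<in>J. w j * \<beta> j) = 0"
  shows "\<forall>j\<in>J. \<beta> j = 0"
proof (rule ccontr)
  note Ht = funpow_right_linear[OF H_add H_linear]
  define supp where "supp = {j\<in>J. \<beta> j \<noteq> 0}"
  assume "\<not> (\<forall>j\<in>J. \<beta> j = 0)"
  then have "supp \<noteq> {}" "finite supp"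
    using \<open>finite J\<close> by (auto simp: supp_def)
  define t where "t = Max supp"
  have t: "t \<in> J" "\<beta> t \<noteq> 0"
    using Max_in[OF \<open>finite supp\<close> \<open>supp \<noteq> {}\<close>] by (auto simp: t_def supp_def)
  have "(H ^^ t) (w j) * \<beta> j = 0" if "j \<in> J - {t}" for j
  proof (cases "\<beta> j = 0")
    case False
    with that have "j < t"
      using Max_ge[OF \<open>finite supp\<close>, of j] by (auto simp: t_def supp_def)
    then show ?thesis by (simp add: below)
  qed simp
  then have "(\<Sum>j\<in>J - {t}. (H ^^ t) (w j) * \<beta> j) = 0"
    by (rule sum.neutral[OF ballI])
  moreover have "(\<Sum>j\<in>J. (H ^^ t) (w j) * \<beta> j) = (H ^^ t) (\<Sum>j\<in>J. w j * \<beta> j)"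
    using sum_comp_morphism[of "H ^^ t" "\<lambda>j. w j * \<beta> j" J, OF Ht(2) Ht(1)] assms(6)
    by (simp add: Ht(3))
  ultimately have "(H ^^ t) (w t) * \<beta> t = 0"
    using sum.remove[OF \<open>finite J\<close> t(1), of "\<lambda>j. (H ^^ t) (w j) * \<beta> j"] assms(7) Ht(2)
    by simp
  with top[of t] t(2) show False by simp
qed

lemma right_linear_not_surj:
  assumes fin_dim: "right_fin_dim K"
    and H_add: "\<And>c d. H (c + d) = H c + H d"
    and H_linear: "\<And>c \<beta>. \<beta> \<in> K \<Longrightarrow> H (c * \<beta>) = H c * \<beta>"
    and "v \<noteq> 0" "H v = 0"
  shows "\<exists>e. \<forall>c. H c \<noteq> e"
proof (rule ccontr)
  assume "\<not> ?thesis"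
  then have "\<forall>y. \<exists>c. H c = y" by blast
  from choice[OF this] obtain g where g: "\<And>y. H (g y) = y"
    by blast
  define w where "w j = (g ^^ j) v" for j
  have top: "(H ^^ t) (w t) = v" for t
  proof (induction t)
    case (Suc t)
    have "(H ^^ Suc t) (w (Suc t)) = (H ^^ t) (H (g (w t)))"
      unfolding funpow_Suc_right[of t H] by (simp add: w_def)
    with Suc show ?case by (simp add: g)
  qed (simp add: w_def)
  have below: "(H ^^ t) (w j) = 0" if "j < t" for j t
  proof -
    have "(H ^^ ((t - Suc j) + Suc j)) (w j) = (H ^^ (t - Suc j)) (H ((H ^^ j) (w j)))"
      by (simp only: funpow_add funpow.simps(2) comp_apply)
    moreover from that have "t - Suc j + Suc j = t" by simp
    ultimately have "(H ^^ t) (w j) = (H ^^ (t - Suc j)) (H ((H ^^ j) (w j)))"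
      by simp
    then show ?thesis
      using top[of j] \<open>H v = 0\<close> funpow_right_linear(2)[OF H_add H_linear] by simp
  qed
  obtain B where B: "finite B" "\<forall>y. \<exists>c. (\<forall>v\<in>B. c v \<in> K) \<and> y = (\<Sum>v\<in>B. v * c v)"
    using fin_dim unfolding right_fin_dim_def by blast
  then have "\<forall>j. \<exists>c. (\<forall>u\<in>B. c u \<in> K) \<and> w j = (\<Sum>u\<in>B. u * c u)"
    by blast
  from choice[OF this] obtain \<gamma> where \<gamma>: "\<forall>j. (\<forall>u\<in>B. \<gamma> j u \<in> K) \<and> w j = (\<Sum>u\<in>B. u * \<gamma> j u)"
    by blast
  have "\<exists>\<beta>. (\<forall>j\<in>{..card B}. \<beta> j \<in> K) \<and> (\<exists>j\<in>{..card B}. \<beta> j \<noteq> 0)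
             \<and> (\<Sum>j\<in>{..card B}. w j * \<beta> j) = 0"
    by (rule dependent_if_card_span_less[OF B(1), of _ "\<lambda>u j. \<gamma> j u"]) (use \<gamma> in auto)
  then obtain \<beta> where \<beta>: "\<forall>j\<in>{..card B}. \<beta> j \<in> K" "\<exists>j\<in>{..card B}. \<beta> j \<noteq> 0"
      "(\<Sum>j\<in>{..card B}. w j * \<beta> j) = 0"
    by blast
  have "\<forall>j\<in>{..card B}. \<beta> j = 0"
    by (rule chain_independent[OF H_add H_linear _ below _ \<beta>(1,3)]) (simp_all add: top \<open>v \<noteq> 0\<close>)
  with \<beta>(2) show False by blast
qed

end

subsection \<open>Multiplicity sequences starting at a\<close>

context sigma_delta
begin

lemma division_subring_centralizer: "division_subring (centralizer \<sigma> \<delta> a)"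
proof
  fix x y
  show "0 \<in> centralizer \<sigma> \<delta> a" "1 \<in> centralizer \<sigma> \<delta> a"
    by (simp_all add: centralizer_iff pseudo_lin_zero pseudo_lin_one)
  show "x \<in> centralizer \<sigma> \<delta> a \<Longrightarrow> y \<in> centralizer \<sigma> \<delta> a \<Longrightarrow> x + y \<in> centralizer \<sigma> \<delta> a"
    by (simp add: centralizer_iff pseudo_lin_add algebra_simps)
  show "x \<in> centralizer \<sigma> \<delta> a \<Longrightarrow> - x \<in> centralizer \<sigma> \<delta> a"
    by (simp add: centralizer_iff pseudo_lin_minus)
  show "x \<in> centralizer \<sigma> \<delta> a \<Longrightarrow> y \<in> centralizer \<sigma> \<delta> a \<Longrightarrow> x * y \<in> centralizer \<sigma> \<delta> a"
    using pseudo_lin_mult_conjugate[of a y a x] by (simp add: centralizer_iff mult.assoc)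
  show "x \<in> centralizer \<sigma> \<delta> a \<Longrightarrow> inverse x \<in> centralizer \<sigma> \<delta> a"
    using pseudo_lin_inverse_conjugate[of x a a]
    by (cases "x = 0") (simp_all add: centralizer_iff pseudo_lin_zero)
qed

lemma quotient_in_centralizer:
  assumes "e \<noteq> 0" "pseudo_lin a e = x * e" "pseudo_lin a (e * \<beta>) = x * (e * \<beta>)"
  shows "\<beta> \<in> centralizer \<sigma> \<delta> a"
proof -
  have "\<sigma> e * pseudo_lin a \<beta> + \<delta> e * \<beta> = x * e * \<beta>"
    using assms(3) by (simp add: pseudo_lin_mult mult.assoc)
  also have "\<dots> = \<sigma> e * (a * \<beta>) + \<delta> e * \<beta>"
    unfolding assms(2)[symmetric] by (simp add: pseudo_lin_def algebra_simps)
  finally have "\<sigma> e * pseudo_lin a \<beta> = \<sigma> e * (a * \<beta>)"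
    by simp
  with sigma_nonzero[OF assms(1)] show ?thesis
    by (simp add: centralizer_iff)
qed

lemma extend_kernel_in_centralizer:
  assumes fin_dim: "right_fin_dim (centralizer \<sigma> \<delta> a)" and "P_eval a as 1 = 0"
    and kernel: "\<And>c. P_eval a as c = 0 \<Longrightarrow> c \<in> centralizer \<sigma> \<delta> a"
  obtains x where "conjugate a x" "\<And>c. P_eval a (as @ [x]) c = 0 \<Longrightarrow> c \<in> centralizer \<sigma> \<delta> a"
proof -
  interpret K: division_subring "centralizer \<sigma> \<delta> a"
    by (rule division_subring_centralizer)
  obtain e where e: "\<And>c. P_eval a as c \<noteq> e"
    using K.right_linear_not_surj[OF fin_dim P_eval_add _ one_neq_zero \<open>P_eval a as 1 = 0\<close>]
      P_eval_mult_conjugate[of a _ _ as] by (auto simp: centralizer_iff)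
  then have "e \<noteq> 0"
    using P_eval_zero by metis
  define x where "x = pseudo_lin a e * inverse e"
  have x: "pseudo_lin a e = x * e"
    using \<open>e \<noteq> 0\<close> by (simp add: x_def mult.assoc)
  have "c \<in> centralizer \<sigma> \<delta> a" if "P_eval a (as @ [x]) c = 0" for c
  proof (cases "P_eval a as c = 0")
    case False
    define \<beta> where "\<beta> = inverse e * P_eval a as c"
    have u: "P_eval a as c = e * \<beta>"
      using \<open>e \<noteq> 0\<close> by (simp add: \<beta>_def mult.assoc[symmetric])
    with that have "pseudo_lin a (e * \<beta>) = x * (e * \<beta>)"
      by (simp add: P_eval_snoc)
    then have "inverse \<beta> \<in> centralizer \<sigma> \<delta> a"
      by (intro K.inverse_mem quotient_in_centralizer[OF \<open>e \<noteq> 0\<close> x])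
    then have "P_eval a as (c * inverse \<beta>) = e * \<beta> * inverse \<beta>"
      using P_eval_mult_conjugate[of a "inverse \<beta>" a as c] by (simp add: u centralizer_iff)
    also have "\<dots> = e"
      using False u by (simp add: mult.assoc)
    finally show ?thesis using e by blast
  qed (rule kernel)
  with x \<open>e \<noteq> 0\<close> show ?thesis
    using that unfolding conjugate_def by blast
qed

lemma exists_seq_kernel_in_centralizer:
  assumes "right_fin_dim (centralizer \<sigma> \<delta> a)"
  shows "\<exists>as. length as = Suc r \<and> hd as = a \<and> (\<forall>x\<in>set as. conjugate a x)
           \<and> (\<forall>c. P_eval a as c = 0 \<longrightarrow> c \<in> centralizer \<sigma> \<delta> a)"
proof (induction r)
  case 0
  have "conjugate a a"
    unfolding conjugate_def by (intro exI[of _ 1]) (simp add: pseudo_lin_one)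
  then show ?case
    by (intro exI[of _ "[a]"]) (simp add: centralizer_iff)
next
  case (Suc r)
  then obtain as where as: "length as = Suc r" "hd as = a" "\<forall>x\<in>set as. conjugate a x"
      "\<forall>c. P_eval a as c = 0 \<longrightarrow> c \<in> centralizer \<sigma> \<delta> a"
    by blast
  then have "P_eval a as 1 = 0"
    using P_eval_Cons_self_one by (cases as) auto
  then obtain x where "conjugate a x" "\<And>c. P_eval a (as @ [x]) c = 0 \<Longrightarrow> c \<in> centralizer \<sigma> \<delta> a"
    using extend_kernel_in_centralizer[OF assms] as(4) by blast
  with as show ?case
    by (intro exI[of _ "as @ [x]"]) (cases as; auto)
qed

lemma multiplicity_seq_if_kernel_in_centralizer:
  assumes "as \<noteq> []" "hd as = a" "\<forall>x\<in>set as. conjugate a x"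
    and kernel: "\<forall>c. P_eval a as c = 0 \<longrightarrow> c \<in> centralizer \<sigma> \<delta> a"
  shows "multiplicity_seq \<sigma> \<delta> as"
proof -
  have "b = a" if root: "P_eval b as 1 = 0" for b
  proof -
    obtain c where c: "c \<noteq> 0" "pseudo_lin a c = b * c"
      using conjugate_of_P_eval_root[OF assms(3) one_neq_zero root] by (auto simp: conjugate_def)
    have "P_eval a as c = 0"
      using P_eval_mult_conjugate[OF c(2), of as 1] root by simp
    with kernel have "pseudo_lin a c = a * c"
      by (simp add: centralizer_iff)
    with c(2) have "b * c = a * c"
      by metis
    with c(1) show ?thesis
      by auto
  qed
  moreover have "P_eval a as 1 = 0"
    using assms(1,2) P_eval_Cons_self_one by (cases as) auto
  ultimately show ?thesis
    using assms(1,2) unfolding multiplicity_seq_def right_dvd_P_seq_iff by blast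
qed

end

theorem mainTheorem14:
  fixes \<sigma> \<delta> :: "'a::division_ring \<Rightarrow> 'a" and a :: 'a
  assumes "ring_endo \<sigma>"
    and "sigma_derivation \<sigma> \<delta>"
    and "right_fin_dim (centralizer \<sigma> \<delta> a)"
  shows "\<forall>r::nat. r > 0 \<longrightarrow>
           (\<exists>as. length as = r \<and> hd as = a \<and> multiplicity_seq \<sigma> \<delta> as)"
proof (intro allI impI)
  fix r :: nat
  assume "r > 0"
  interpret sigma_delta \<sigma> \<delta>
    using assms(1,2) by unfold_locales
  obtain as where as: "length as = Suc (r - 1)" "hd as = a" "\<forall>x\<in>set as. conjugate a x"
      "\<forall>c. P_eval a as c = 0 \<longrightarrow> c \<in> centralizer \<sigma> \<delta> a"
    using exists_seq_kernel_in_centralizer[OF assms(3)] by blast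
  have "as \<noteq> []"
    using as(1) by auto
  with as have "multiplicity_seq \<sigma> \<delta> as"
    by (intro multiplicity_seq_if_kernel_in_centralizer)
  moreover have "length as = r"
    using as(1) \<open>r > 0\<close> by simp
  ultimately show "\<exists>as. length as = r \<and> hd as = a \<and> multiplicity_seq \<sigma> \<delta> as"
    using as(2) by blast
qed

end
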